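(* Let $N\geq 2$ and $n\geq 1$ be integers. For a map $u=(u_1,\dots,u_N)^\top\in C^\infty(\mathbb{R}^n)^N$, write $Du\otimes Du:D^2u$ for the $\mathbb{R}^N$-valued function whose $\alpha$-th component is \[ \sum_{i,j=1}^n\sum_{\beta=1}^N D_iu_\alpha\, D_ju_\beta\, D^2_{ij}u_\beta ,\qquad \alpha=1,\dots,N . \] Then there exist a map $u^3\in C^\infty(\mathbb{R}^n)^N$ with $Du^3\otimes Du^3:D^2u^3=0$ on $\mathbb{R}^n$ and an open set $\Omega\subseteq\mathbb{R}^n$ such that \[ \sup_{\Omega}|u^3|\;>\;\max_{\partial\Omega}|u^3| , \] i.e. the modulus $|u^3|$ does not satisfy the Maximum Principle.
   Context: $D_i=\partial/\partial x_i$, $D^2_{ij}=\partial^2/\partial x_i\partial x_j$, and $|\cdot|$ is the Euclidean norm on $\mathbb{R}^N$. *)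

theory Defs
  imports "HOL-Analysis.Analysis"
begin

definition partial :: "'n::finite \<Rightarrow> (real^'n \<Rightarrow> real) \<Rightarrow> real^'n \<Rightarrow> real" where
  "partial i f x = deriv (\<lambda>t. f (x + t *\<^sub>R axis i 1)) 0"

definition has_partial :: "'n::finite \<Rightarrow> (real^'n \<Rightarrow> real) \<Rightarrow> real^'n \<Rightarrow> bool" where
  "has_partial i f x \<longleftrightarrow> (\<lambda>t. f (x + t *\<^sub>R axis i 1)) differentiable (at 0)"

fun Ck :: "nat \<Rightarrow> (real^'n::finite \<Rightarrow> real) \<Rightarrow> bool" where
  "Ck 0 f \<longleftrightarrow> continuous_on UNIV f"
| "Ck (Suc k) f \<longleftrightarrow> continuous_on UNIV f \<and> (\<forall>i x. has_partial i f x) \<and> (\<forall>i. Ck k (partial i f))"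

definition Cinf :: "(real^'n::finite \<Rightarrow> real) \<Rightarrow> bool" where
  "Cinf f \<longleftrightarrow> (\<forall>k. Ck k f)"

end

theory Submission imports Defs begin

text \<open>Take \<open>u = (Re w, Im w, 0, \<dots>, 0)\<close> with \<open>w(y) = 1 + \<Sum>\<^sub>k cis y\<^sub>k\<close>. Each \<open>D\<^sub>ju\<close> depends
  only on \<open>y\<^sub>j\<close> and moves on a circle in the plane of the first two components, so
  \<open>D\<^sub>iD\<^sub>ju = 0\<close> for \<open>i \<noteq> j\<close> and \<open>D\<^sub>jD\<^sub>ju \<bottom> D\<^sub>ju\<close>; hence \<open>Du \<otimes> Du : D\<^sup>2u = 0\<close>. On the other
  hand \<open>|u| = |w| \<le> 1 + n\<close> with equality at the origin, while on the unit sphere some \<open>y\<^sub>k\<close> is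
  nonzero and of modulus less than \<open>2\<pi>\<close>, so \<open>Re w < 1 + n\<close> and hence \<open>|u| < 1 + n\<close> there.
  Thus \<open>\<Omega>\<close> can be taken to be the unit ball.\<close>

definition trig_sum :: "('n::finite \<Rightarrow> real) \<Rightarrow> ('n \<Rightarrow> real) \<Rightarrow> real \<Rightarrow> real^'n \<Rightarrow> real" where
  "trig_sum p q c y = c + (\<Sum>k\<in>UNIV. p k * cos (y$k) + q k * sin (y$k))"

lemma trig_sum_axis_has_real_derivative:
  "((\<lambda>t. trig_sum p q c (x + t *\<^sub>R axis i 1)) has_real_derivative
      (q i * cos (x$i) - p i * sin (x$i))) (at 0)"
proof -
  define e where "e k t = p k * cos (x$k + (if k = i then t else 0)) + q k * sin (x$k + (if k = i then t else 0))"
    for k t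
  have "(\<lambda>t. trig_sum p q c (x + t *\<^sub>R axis i 1)) = (\<lambda>t. c + (\<Sum>k\<in>UNIV. e k t))"
    by (auto simp: trig_sum_def axis_def e_def intro!: ext sum.cong)
  moreover have "(e k has_real_derivative (if k = i then q i * cos (x$i) - p i * sin (x$i) else 0)) (at 0)"
    for k
    unfolding e_def by (cases "k = i") (auto intro!: derivative_eq_intros)
  then have "((\<lambda>t. c + (\<Sum>k\<in>UNIV. e k t)) has_real_derivative
      (0 + (\<Sum>k\<in>UNIV. if k = i then q i * cos (x$i) - p i * sin (x$i) else 0))) (at 0)"
    by (intro DERIV_add DERIV_const DERIV_sum)
  ultimately show ?thesis by simp
qed

lemma has_partial_trig_sum: "has_partial i (trig_sum p q c) x"
  unfolding has_partial_def real_differentiable_def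
  using trig_sum_axis_has_real_derivative by blast

lemma partial_trig_sum_apply: "partial i (trig_sum p q c) x = q i * cos (x$i) - p i * sin (x$i)"
  unfolding partial_def by (rule DERIV_imp_deriv[OF trig_sum_axis_has_real_derivative])

lemma partial_trig_sum:
  "partial i (trig_sum p q c) = trig_sum (\<lambda>k. if k = i then q i else 0) (\<lambda>k. if k = i then - p i else 0) 0"
proof
  fix x
  have "(\<Sum>k\<in>UNIV. (if k = i then q i else 0) * cos (x$k) + (if k = i then - p i else 0) * sin (x$k))
      = (\<Sum>k\<in>UNIV. if k = i then q i * cos (x$i) - p i * sin (x$i) else 0)"
    by (rule sum.cong) auto
  then show "partial i (trig_sum p q c) x = trig_sum (\<lambda>k. if k = i then q i else 0) (\<lambda>k. if k = i then - p i else 0) 0 x"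
    by (simp add: partial_trig_sum_apply trig_sum_def)
qed

lemma continuous_on_trig_sum: "continuous_on UNIV (trig_sum p q c)"
  unfolding trig_sum_def by (intro continuous_intros)

lemma Cinf_trig_sum: "Cinf (trig_sum p q c)"
proof -
  have "Ck k (trig_sum p q c)" for k
    by (induction k arbitrary: p q c)
      (auto simp: continuous_on_trig_sum partial_trig_sum intro: has_partial_trig_sum)
  then show ?thesis by (simp add: Cinf_def)
qed

text \<open>Mixed second derivatives vanish, and along the \<open>j\<close>-th axis \<open>D\<^sub>ju\<close> traces an ellipse with
  conjugate semi-axes \<open>P \<cdot> j\<close>, \<open>Q \<cdot> j\<close>. The hypotheses make it a circle, so the velocity
  \<open>D\<^sub>jD\<^sub>ju\<close> is orthogonal to the position \<open>D\<^sub>ju\<close>.\<close>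

lemma trig_sum_map_tensor_hessian_eq_0:
  fixes u :: "real^'n::finite \<Rightarrow> real^'N::finite"
  assumes u: "\<And>\<beta>. (\<lambda>y. u y $ \<beta>) = trig_sum (P \<beta>) (Q \<beta>) (C \<beta>)"
    and orth: "\<And>j. (\<Sum>\<beta>\<in>UNIV. P \<beta> j * Q \<beta> j) = 0"
    and same_length: "\<And>j. (\<Sum>\<beta>\<in>UNIV. (P \<beta> j)\<^sup>2) = (\<Sum>\<beta>\<in>UNIV. (Q \<beta> j)\<^sup>2)"
  shows "(\<Sum>i\<in>UNIV. \<Sum>j\<in>UNIV. \<Sum>\<beta>\<in>UNIV.
            partial i (\<lambda>y. u y $ \<alpha>) x * partial j (\<lambda>y. u y $ \<beta>) x
            * partial i (partial j (\<lambda>y. u y $ \<beta>)) x) = 0"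
proof -
  have inner: "(\<Sum>\<beta>\<in>UNIV. partial j (\<lambda>y. u y $ \<beta>) x * partial i (partial j (\<lambda>y. u y $ \<beta>)) x) = 0"
    for i j
  proof -
    define s c where "s = sin (x$j)" and "c = cos (x$j)"
    have first: "partial j (\<lambda>y. u y $ \<beta>) x = Q \<beta> j * c - P \<beta> j * s" for \<beta>
      by (simp add: u partial_trig_sum_apply s_def c_def)
    have second: "partial i (partial j (\<lambda>y. u y $ \<beta>)) x =
        (if i = j then - Q \<beta> j * s - P \<beta> j * c else 0)" for \<beta>
      by (simp only: u partial_trig_sum[of j] partial_trig_sum_apply) (simp add: s_def c_def)
    have "(Q \<beta> j * c - P \<beta> j * s) * (- Q \<beta> j * s - P \<beta> j * c)
        = s * c * ((P \<beta> j)\<^sup>2 - (Q \<beta> j)\<^sup>2) + (s\<^sup>2 - c\<^sup>2) * (P \<beta> j * Q \<beta> j)" for \<beta>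
      by (simp add: algebra_simps power2_eq_square)
    then have "(\<Sum>\<beta>\<in>UNIV. (Q \<beta> j * c - P \<beta> j * s) * (- Q \<beta> j * s - P \<beta> j * c))
        = s * c * ((\<Sum>\<beta>\<in>UNIV. (P \<beta> j)\<^sup>2) - (\<Sum>\<beta>\<in>UNIV. (Q \<beta> j)\<^sup>2))
          + (s\<^sup>2 - c\<^sup>2) * (\<Sum>\<beta>\<in>UNIV. P \<beta> j * Q \<beta> j)"
      by (simp add: sum.distrib sum_distrib_left sum_subtractf right_diff_distrib)
    then show ?thesis
      unfolding first second by (cases "i = j") (simp_all add: orth same_length)
  qed
  show ?thesis
    by (simp add: mult.assoc sum_distrib_left[symmetric] inner)
qed

lemma cos_less_one: "x \<noteq> 0 \<Longrightarrow> \<bar>x\<bar> < 2 * pi \<Longrightarrow> cos x < 1"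
proof -
  assume "x \<noteq> 0" "\<bar>x\<bar> < 2 * pi"
  moreover have "cos x \<noteq> 1"
  proof
    assume "cos x = 1"
    then obtain m :: int where m: "x = m * 2 * pi" by (auto simp: cos_one_2pi_int)
    with \<open>x \<noteq> 0\<close> have "\<bar>real_of_int m\<bar> \<ge> 1" by auto
    then have "\<bar>x\<bar> \<ge> 2 * pi" by (simp add: m abs_mult)
    with \<open>\<bar>x\<bar> < 2 * pi\<close> show False by linarith
  qed
  ultimately show "cos x < 1" using cos_le_one[of x] by linarith
qed

lemma norm_one_plus_sum_cis_le:
  "finite A \<Longrightarrow> cmod (1 + (\<Sum>k\<in>A. cis (t k))) \<le> 1 + real (card A)"
  using norm_triangle_ineq[of 1 "\<Sum>k\<in>A. cis (t k)"] norm_sum[of cis] norm_sum[of "\<lambda>k. cis (t k)" A]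
  by simp

lemma norm_one_plus_sum_cis_less:
  assumes "finite A" "k \<in> A" "cos (t k) < 1"
  shows "cmod (1 + (\<Sum>k\<in>A. cis (t k))) < 1 + real (card A)"
proof -
  define z where "z = (\<Sum>k\<in>A. cis (t k))"
  have "Re z = (\<Sum>k\<in>A. cos (t k))" by (simp add: z_def)
  also have "\<dots> < (\<Sum>k\<in>A. 1)"
    using assms by (intro sum_strict_mono_ex1) auto
  finally have re: "Re z < real (card A)" by simp
  have "cmod z \<le> real (card A)"
    using norm_sum[of "\<lambda>k. cis (t k)" A] by (simp add: z_def)
  then have "(cmod z)\<^sup>2 \<le> (real (card A))\<^sup>2" by (simp add: power_mono)
  have "(cmod (1 + z))\<^sup>2 = 1 + 2 * Re z + (cmod z)\<^sup>2"
    unfolding cmod_power2 by (simp add: power2_eq_square algebra_simps)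
  also have "\<dots> < 1 + 2 * real (card A) + (real (card A))\<^sup>2"
    using re \<open>(cmod z)\<^sup>2 \<le> (real (card A))\<^sup>2\<close> by linarith
  also have "\<dots> = (1 + real (card A))\<^sup>2"
    by (simp add: power2_sum)
  finally have "(cmod (1 + z))\<^sup>2 < (1 + real (card A))\<^sup>2" .
  then show ?thesis
    unfolding z_def by (rule power2_less_imp_less) simp
qed

lemma SUP_frontier_less_SUP:
  fixes f :: "'a::topological_space \<Rightarrow> real"
  assumes "compact K" "K \<noteq> {}" "continuous_on K f" "\<And>y. y \<in> K \<Longrightarrow> f y < M"
    and "x \<in> S" "f x = M" "\<And>y. y \<in> S \<Longrightarrow> f y \<le> M"
  shows "(SUP y\<in>K. f y) < (SUP y\<in>S. f y)"
proof -
  obtain y0 where "y0 \<in> K" and y0_max: "\<And>y. y \<in> K \<Longrightarrow> f y \<le> f y0"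
    using continuous_attains_sup[OF assms(1-3)] by blast
  have "(SUP y\<in>K. f y) \<le> f y0"
    using assms(2) y0_max by (rule cSUP_least)
  also have "\<dots> < M" using assms(4) \<open>y0 \<in> K\<close> .
  also have "\<dots> \<le> (SUP y\<in>S. f y)"
    using assms(5-7) by (metis bdd_aboveI2 cSUP_upper)
  finally show ?thesis .
qed

definition plane_embed :: "'N::finite \<Rightarrow> 'N \<Rightarrow> complex \<Rightarrow> real^'N" where
  "plane_embed a b z = (\<chi> \<beta>. if \<beta> = a then Re z else if \<beta> = b then Im z else 0)"

lemma norm_plane_embed: "a \<noteq> b \<Longrightarrow> norm (plane_embed a b z) = cmod z"
proof -
  assume "a \<noteq> b"
  then have "(\<Sum>\<beta>\<in>UNIV. (plane_embed a b z $ \<beta>)\<^sup>2)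
      = (\<Sum>\<beta>\<in>UNIV. (if \<beta> = a then (Re z)\<^sup>2 else 0) + (if \<beta> = b then (Im z)\<^sup>2 else 0))"
    by (intro sum.cong) (auto simp: plane_embed_def)
  then show ?thesis
    by (simp add: norm_vec_def L2_set_def sum.distrib cmod_def)
qed

definition cis_sum_map :: "'N::finite \<Rightarrow> 'N \<Rightarrow> real^'n::finite \<Rightarrow> real^'N" where
  "cis_sum_map a b y = plane_embed a b (1 + (\<Sum>k\<in>UNIV. cis (y$k)))"

lemma cis_sum_map_component:
  assumes "a \<noteq> b"
  shows "(\<lambda>y. cis_sum_map a b y $ \<beta>) =
    trig_sum (\<lambda>_. if \<beta> = a then 1 else 0) (\<lambda>_. if \<beta> = b then 1 else 0) (if \<beta> = a then 1 else 0)"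
  using assms by (auto simp: cis_sum_map_def plane_embed_def trig_sum_def sum.distrib)

lemma Cinf_cis_sum_map: "a \<noteq> b \<Longrightarrow> Cinf (\<lambda>y. cis_sum_map a b y $ \<beta>)"
  by (simp add: cis_sum_map_component Cinf_trig_sum)

lemma cis_sum_map_tensor_hessian_eq_0:
  fixes a b :: "'N::finite"
  assumes "a \<noteq> b"
  shows "(\<Sum>i\<in>UNIV. \<Sum>j\<in>UNIV. \<Sum>\<beta>\<in>UNIV.
            partial i (\<lambda>y. cis_sum_map a b y $ \<alpha>) x * partial j (\<lambda>y. cis_sum_map a b y $ \<beta>) x
            * partial i (partial j (\<lambda>y. cis_sum_map a b y $ \<beta>)) x) = 0"
proof (rule trig_sum_map_tensor_hessian_eq_0[OF cis_sum_map_component[OF assms]])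
  show "(\<Sum>\<beta>\<in>UNIV. (if \<beta> = a then 1 else 0) * (if \<beta> = b then 1 else 0)) = (0::real)"
    using assms by (intro sum.neutral) simp
  have "(if \<beta> = c then 1 else 0)\<^sup>2 = (if \<beta> = c then 1 else (0::real))" for \<beta> c :: 'N
    by simp
  then show "(\<Sum>\<beta>\<in>UNIV. (if \<beta> = a then 1 else 0)\<^sup>2) = (\<Sum>\<beta>\<in>UNIV. (if \<beta> = b then 1 else (0::real))\<^sup>2)"
    by simp
qed

lemma norm_cis_sum_map_le: "a \<noteq> b \<Longrightarrow> norm (cis_sum_map a b y) \<le> 1 + real CARD('n::finite)"
  for y :: "real^'n"
  unfolding cis_sum_map_def norm_plane_embed by (rule norm_one_plus_sum_cis_le) simp

lemma norm_cis_sum_map_0: "a \<noteq> b \<Longrightarrow> norm (cis_sum_map a b (0 :: real^'n::finite)) = 1 + real CARD('n)"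
  using norm_of_nat[of "Suc CARD('n)", where 'a = complex]
  by (simp add: cis_sum_map_def norm_plane_embed)

lemma norm_cis_sum_map_less_on_sphere:
  fixes y :: "real^'n::finite"
  assumes "a \<noteq> b" "norm y = 1"
  shows "norm (cis_sum_map a b y) < 1 + real CARD('n)"
proof -
  have "y \<noteq> 0" using \<open>norm y = 1\<close> by auto
  then obtain k where "y$k \<noteq> 0" by (auto simp: vec_eq_iff)
  moreover have "\<bar>y$k\<bar> < 2 * pi"
    using component_le_norm_cart[of y k] \<open>norm y = 1\<close> pi_gt3 by linarith
  ultimately show ?thesis
    unfolding cis_sum_map_def norm_plane_embed[OF \<open>a \<noteq> b\<close>]
    by (intro norm_one_plus_sum_cis_less cos_less_one) auto
qed

lemma continuous_on_cis_sum_map: "continuous_on S (cis_sum_map a b)"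
  unfolding cis_sum_map_def plane_embed_def
proof (intro continuous_on_vec_lambda)
  show "continuous_on S (\<lambda>y. if \<beta> = a then Re (1 + (\<Sum>k\<in>UNIV. cis (y$k)))
      else if \<beta> = b then Im (1 + (\<Sum>k\<in>UNIV. cis (y$k))) else 0)" for \<beta>
    by (cases "\<beta> = a"; cases "\<beta> = b") (simp_all add: continuous_intros)
qed

theorem mainTheorem2:
  assumes "CARD('N::finite) \<ge> 2"
  shows "\<exists>(u :: real^'n::finite \<Rightarrow> real^'N) (\<Omega> :: (real^'n) set).
           (\<forall>\<alpha>. Cinf (\<lambda>y. u y $ \<alpha>)) \<and>
           (\<forall>x \<alpha>. (\<Sum>i\<in>UNIV. \<Sum>j\<in>UNIV. \<Sum>\<beta>\<in>UNIV.
                partial i (\<lambda>y. u y $ \<alpha>) x * partial j (\<lambda>y. u y $ \<beta>) x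
                * partial i (partial j (\<lambda>y. u y $ \<beta>)) x) = 0) \<and>
           open \<Omega> \<and> bounded \<Omega> \<and> frontier \<Omega> \<noteq> {} \<and>
           (SUP y\<in>frontier \<Omega>. norm (u y)) < (SUP x\<in>\<Omega>. norm (u x))"
proof -
  have "\<not> (\<forall>a\<in>UNIV. \<forall>b\<in>UNIV. a = (b :: 'N))"
    using assms card_le_Suc0_iff_eq[of "UNIV :: 'N set"] by simp
  then obtain a b :: 'N where "a \<noteq> b" by blast
  let ?u = "cis_sum_map a b :: real^'n \<Rightarrow> real^'N"
  have "(SUP y\<in>sphere 0 1. norm (?u y)) < (SUP y\<in>ball 0 1. norm (?u y))"
    using norm_cis_sum_map_le[OF \<open>a \<noteq> b\<close>] norm_cis_sum_map_0[OF \<open>a \<noteq> b\<close>]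
      norm_cis_sum_map_less_on_sphere[OF \<open>a \<noteq> b\<close>]
    by (intro SUP_frontier_less_SUP[where x = 0 and M = "1 + real CARD('n)"])
      (auto intro!: continuous_on_norm continuous_on_cis_sum_map)
  with \<open>a \<noteq> b\<close> show ?thesis
    by (intro exI[of _ ?u] exI[of _ "ball 0 1"])
      (simp add: Cinf_cis_sum_map cis_sum_map_tensor_hessian_eq_0)
qed

end
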